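(* Let $(X,\mathcal A,\mu,\mu^{\otimes2},R,I,\Pi_R,G,E_0,\eta)$ be an admissible structural model with $\eta\in[0,1)$, and assume the global decoupling condition \[\mu^{\otimes2}\big(((\Pi_R^{-1}(B)\setminus B)\times X)\cap G\big)=0\qquad\text{for all } B\in\mathcal A \text{ with } B\subseteq R.\] Then: (a) $\mu^{\otimes2}(G\setminus(R\times R))=0$, and for every $B\in\mathcal A$ with $B\subseteq R$, $\mu^{\otimes2}((B\times X)\cap G)=\mu^{\otimes2}((B\times R)\cap(G\cap(R\times R)))$; (b) for every $B\in\mathcal A$ with $B\subseteq R$, \[\mu^{\otimes2}((B\times X)\cap G)=\frac{\mu(B)}{1-\eta}.\]
   Context: For a nonempty set $X$, an algebra $\mathcal A\subseteq\mathcal P(X)$ contains $\varnothing,X$ and is closed under finite unions and complements. A finitely additive measure satisfies $\mu(\varnothing)=0$ and additivity on disjoint pairs. $\mathcal A\otimes\mathcal A$ is the algebra generated by rectangles $B_1\times B_2$, $B_i\in\mathcal A$. For relations, $H\circ K=\{(x,z):\exists y\,(x,y)\in H,(y,z)\in K\}$. A pre-structural datum is a tuple $(X,\mathcal A,\mu,\mu^{\otimes2},R,I,\Pi_R,G,E_0,\eta)$ where: $X$ nonempty; $\mathcal A$ an algebra on $X$; $\mu:\mathcal A\to[0,\infty)$ finitely additive; $\mu^{\otimes2}:\mathcal A\otimes\mathcal A\to[0,\infty)$ finitely additive with $\mu^{\otimes2}(B_1\times B_2)=\mu(B_1)\mu(B_2)$; $R,I\in\mathcal A$ disjoint; $\Pi_R:X\to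 R$ a map; $G\in\mathcal A\otimes\mathcal A$; $E_0\in(0,\infty)$; $\eta\in[0,1]$. Axiom I: $\Pi_R\circ\Pi_R=\Pi_R$, $\Pi_R(r)=r$ for $r\in R$, and $\Pi_R^{-1}(B)\in\mathcal A$ for $B\in\mathcal A$, $B\subseteq R$. Axiom II: $G$ reflexive, symmetric, $G\circ G=G$. Axiom III: (a) $\mu(R)+\mu(I)=E_0$; (b) $\mu(\Pi_R^{-1}(B))=\mu(B)$ for $B\in\mathcal A$, $B\subseteq R$; (c) for all $B\in\mathcal A$, $\mu^{\otimes2}((B\times X)\cap G)=\mu(B)+\eta\,\mu^{\otimes2}((\Pi_R^{-1}(B)\times X)\cap G)$. An admissible structural model is a pre-structural datum satisfying Axioms I–III. *)

theory Defs
  imports "HOL-Analysis.Analysis"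
begin

definition set_algebra :: "'a set \<Rightarrow> 'a set set \<Rightarrow> bool" where
  "set_algebra X A \<longleftrightarrow> A \<subseteq> Pow X \<and> {} \<in> A \<and> X \<in> A
     \<and> (\<forall>B\<in>A. \<forall>C\<in>A. B \<union> C \<in> A) \<and> (\<forall>B\<in>A. X - B \<in> A)"

definition fin_add_measure :: "'a set set \<Rightarrow> ('a set \<Rightarrow> real) \<Rightarrow> bool" where
  "fin_add_measure A m \<longleftrightarrow> (\<forall>B\<in>A. 0 \<le> m B) \<and> m {} = 0
     \<and> (\<forall>B\<in>A. \<forall>C\<in>A. B \<inter> C = {} \<longrightarrow> m (B \<union> C) = m B + m C)"

definition prod_algebra :: "'a set \<Rightarrow> 'a set set \<Rightarrow> ('a \<times> 'a) set set" where
  "prod_algebra X A = \<Inter> {S. set_algebra (X \<times> X) S \<and> (\<forall>B1\<in>A. \<forall>B2\<in>A. B1 \<times> B2 \<in> S)}"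

definition pre_structural ::
  "'a set \<Rightarrow> 'a set set \<Rightarrow> ('a set \<Rightarrow> real) \<Rightarrow> (('a \<times> 'a) set \<Rightarrow> real) \<Rightarrow> 'a set \<Rightarrow> 'a set
   \<Rightarrow> ('a \<Rightarrow> 'a) \<Rightarrow> ('a \<times> 'a) set \<Rightarrow> real \<Rightarrow> real \<Rightarrow> bool" where
  "pre_structural X A \<mu> \<mu>2 R I PiR G E0 \<eta> \<longleftrightarrow>
     X \<noteq> {} \<and> set_algebra X A \<and> fin_add_measure A \<mu>
     \<and> fin_add_measure (prod_algebra X A) \<mu>2
     \<and> (\<forall>B1\<in>A. \<forall>B2\<in>A. \<mu>2 (B1 \<times> B2) = \<mu> B1 * \<mu> B2)
     \<and> R \<in> A \<and> I \<in> A \<and> R \<inter> I = {}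
     \<and> (\<forall>x\<in>X. PiR x \<in> R)
     \<and> G \<in> prod_algebra X A \<and> 0 < E0 \<and> 0 \<le> \<eta> \<and> \<eta> \<le> 1"

definition axiom_I :: "'a set \<Rightarrow> 'a set set \<Rightarrow> 'a set \<Rightarrow> ('a \<Rightarrow> 'a) \<Rightarrow> bool" where
  "axiom_I X A R PiR \<longleftrightarrow> (\<forall>x\<in>X. PiR (PiR x) = PiR x) \<and> (\<forall>r\<in>R. PiR r = r)
     \<and> (\<forall>B\<in>A. B \<subseteq> R \<longrightarrow> PiR -` B \<inter> X \<in> A)"

definition axiom_II :: "'a set \<Rightarrow> ('a \<times> 'a) set \<Rightarrow> bool" where
  "axiom_II X G \<longleftrightarrow> (\<forall>x\<in>X. (x, x) \<in> G) \<and> sym G \<and> G O G = G"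

definition axiom_III ::
  "'a set \<Rightarrow> 'a set set \<Rightarrow> ('a set \<Rightarrow> real) \<Rightarrow> (('a \<times> 'a) set \<Rightarrow> real) \<Rightarrow> 'a set \<Rightarrow> 'a set
   \<Rightarrow> ('a \<Rightarrow> 'a) \<Rightarrow> ('a \<times> 'a) set \<Rightarrow> real \<Rightarrow> real \<Rightarrow> bool" where
  "axiom_III X A \<mu> \<mu>2 R I PiR G E0 \<eta> \<longleftrightarrow>
     \<mu> R + \<mu> I = E0
     \<and> (\<forall>B\<in>A. B \<subseteq> R \<longrightarrow> \<mu> (PiR -` B \<inter> X) = \<mu> B)
     \<and> (\<forall>B\<in>A. \<mu>2 ((B \<times> X) \<inter> G) = \<mu> B + \<eta> * \<mu>2 (((PiR -` B \<inter> X) \<times> X) \<inter> G))"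

definition admissible_model ::
  "'a set \<Rightarrow> 'a set set \<Rightarrow> ('a set \<Rightarrow> real) \<Rightarrow> (('a \<times> 'a) set \<Rightarrow> real) \<Rightarrow> 'a set \<Rightarrow> 'a set
   \<Rightarrow> ('a \<Rightarrow> 'a) \<Rightarrow> ('a \<times> 'a) set \<Rightarrow> real \<Rightarrow> real \<Rightarrow> bool" where
  "admissible_model X A \<mu> \<mu>2 R I PiR G E0 \<eta> \<longleftrightarrow>
     pre_structural X A \<mu> \<mu>2 R I PiR G E0 \<eta> \<and> axiom_I X A R PiR \<and> axiom_II X G
     \<and> axiom_III X A \<mu> \<mu>2 R I PiR G E0 \<eta>"

end

theory Submission
  imports Defs
begin

text \<open>Decoupling at \<open>B = R\<close> says that \<open>G\<close> carries no \<open>\<mu>\<otimes>\<mu>\<close>-mass over \<open>X - R\<close>, while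
  Axiom III(c) at \<open>B = X - R\<close>, whose \<open>\<Pi>\<^sub>R\<close>-preimage is empty, says that this mass is
  \<open>\<mu>(X - R)\<close>. So \<open>X - R\<close> is \<open>\<mu>\<close>-null, every rectangle meeting \<open>X - R\<close> in a factor is
  \<open>\<mu>\<otimes>\<mu>\<close>-null, and (a) follows. For (b), decoupling lets one replace \<open>\<Pi>\<^sub>R\<^sup>-\<^sup>1(B)\<close> by \<open>B\<close>
  on the right of Axiom III(c), leaving the linear equation \<open>m = \<mu>(B) + \<eta> m\<close>.\<close>

lemma set_algebra_subset: "set_algebra X S \<Longrightarrow> B \<in> S \<Longrightarrow> B \<subseteq> X"
  unfolding set_algebra_def by auto

lemma set_algebra_Int:
  assumes "set_algebra X S" "B \<in> S" "C \<in> S"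
  shows "B \<inter> C \<in> S"
proof -
  have "X - ((X - B) \<union> (X - C)) \<in> S"
    using assms unfolding set_algebra_def by auto
  moreover have "X - ((X - B) \<union> (X - C)) = B \<inter> C"
    using assms set_algebra_subset by blast
  ultimately show ?thesis by simp
qed

lemma set_algebra_Diff:
  assumes "set_algebra X S" "B \<in> S" "C \<in> S"
  shows "B - C \<in> S"
proof -
  have "B \<inter> (X - C) \<in> S"
    using assms set_algebra_Int[of X S B "X - C"] unfolding set_algebra_def by auto
  moreover have "B \<inter> (X - C) = B - C"
    using assms set_algebra_subset by blast
  ultimately show ?thesis by simp
qed

lemma set_algebra_prod_algebra:
  assumes "set_algebra X A"
  shows "set_algebra (X \<times> X) (prod_algebra X A)"
proof -
  let ?F = "{S. set_algebra (X \<times> X) S \<and> (\<forall>B1\<in>A. \<forall>B2\<in>A. B1 \<times> B2 \<in> S)}"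
  have "Pow (X \<times> X) \<in> ?F"
    using assms unfolding set_algebra_def by auto
  show ?thesis
    unfolding prod_algebra_def set_algebra_def[of "X \<times> X" "\<Inter> ?F"]
  proof (intro conjI ballI)
    show "\<Inter> ?F \<subseteq> Pow (X \<times> X)"
      using \<open>Pow (X \<times> X) \<in> ?F\<close> by blast
  qed (auto simp: set_algebra_def)
qed

lemma times_in_prod_algebra: "B1 \<in> A \<Longrightarrow> B2 \<in> A \<Longrightarrow> B1 \<times> B2 \<in> prod_algebra X A"
  unfolding prod_algebra_def by auto

lemma fin_add_measure_nonneg: "fin_add_measure S m \<Longrightarrow> B \<in> S \<Longrightarrow> 0 \<le> m B"
  unfolding fin_add_measure_def by auto

lemma fin_add_measure_empty: "fin_add_measure S m \<Longrightarrow> m {} = 0"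
  unfolding fin_add_measure_def by auto

lemma fin_add_measure_Un:
  "fin_add_measure S m \<Longrightarrow> B \<in> S \<Longrightarrow> C \<in> S \<Longrightarrow> B \<inter> C = {} \<Longrightarrow> m (B \<union> C) = m B + m C"
  unfolding fin_add_measure_def by auto

lemma fin_add_measure_Diff:
  assumes "fin_add_measure S m" "set_algebra Y S" "B \<in> S" "C \<in> S" "B \<subseteq> C"
  shows "m C = m B + m (C - B)"
proof -
  have "m C = m (B \<union> (C - B))"
    using \<open>B \<subseteq> C\<close> by (simp add: Un_absorb1)
  also have "\<dots> = m B + m (C - B)"
    using assms set_algebra_Diff by (intro fin_add_measure_Un) auto
  finally show ?thesis .
qed

lemma fin_add_measure_mono:
  assumes "fin_add_measure S m" "set_algebra Y S" "B \<in> S" "C \<in> S" "B \<subseteq> C"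
  shows "m B \<le> m C"
  using fin_add_measure_Diff[OF assms] fin_add_measure_nonneg[OF assms(1)]
    set_algebra_Diff[OF assms(2,4,3)] by simp

lemma fin_add_measure_null_subset:
  assumes "fin_add_measure S m" "set_algebra Y S" "B \<in> S" "C \<in> S" "B \<subseteq> C" "m C = 0"
  shows "m B = 0"
  using fin_add_measure_mono[OF assms(1-5)] fin_add_measure_nonneg[OF assms(1,3)] \<open>m C = 0\<close>
  by simp

locale admissible_structural_model =
  fixes X :: "'a set" and A :: "'a set set" and \<mu> :: "'a set \<Rightarrow> real"
    and \<mu>2 :: "('a \<times> 'a) set \<Rightarrow> real" and R I :: "'a set" and PiR :: "'a \<Rightarrow> 'a"
    and G :: "('a \<times> 'a) set" and E0 \<eta> :: real
  assumes admissible: "admissible_model X A \<mu> \<mu>2 R I PiR G E0 \<eta>"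
begin

abbreviation "P \<equiv> prod_algebra X A"

lemma
  shows algebra: "set_algebra X A"
    and fin_add_\<mu>: "fin_add_measure A \<mu>"
    and fin_add_\<mu>2: "fin_add_measure P \<mu>2"
    and \<mu>2_times: "\<And>B1 B2. B1 \<in> A \<Longrightarrow> B2 \<in> A \<Longrightarrow> \<mu>2 (B1 \<times> B2) = \<mu> B1 * \<mu> B2"
    and R_in_A: "R \<in> A"
    and PiR_in_R: "\<And>x. x \<in> X \<Longrightarrow> PiR x \<in> R"
    and G_in_P: "G \<in> P"
    and PiR_fixes_R: "\<And>r. r \<in> R \<Longrightarrow> PiR r = r"
    and preimage_in_A: "\<And>B. B \<in> A \<Longrightarrow> B \<subseteq> R \<Longrightarrow> PiR -` B \<inter> X \<in> A"
    and axiom_III_c: "\<And>B. B \<in> A \<Longrightarrow>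
          \<mu>2 ((B \<times> X) \<inter> G) = \<mu> B + \<eta> * \<mu>2 (((PiR -` B \<inter> X) \<times> X) \<inter> G)"
  using admissible
  unfolding admissible_model_def pre_structural_def axiom_I_def axiom_III_def by auto

lemma prod_algebra: "set_algebra (X \<times> X) P"
  using set_algebra_prod_algebra[OF algebra] .

lemma space_in_A: "X \<in> A"
  using algebra unfolding set_algebra_def by auto

lemma compl_R_in_A: "X - R \<in> A"
  using algebra R_in_A unfolding set_algebra_def by auto

lemma R_subset: "R \<subseteq> X"
  using set_algebra_subset[OF algebra R_in_A] .

lemma G_subset: "G \<subseteq> X \<times> X"
  using set_algebra_subset[OF prod_algebra G_in_P] .

lemma times_Int_G_in_P: "B1 \<in> A \<Longrightarrow> B2 \<in> A \<Longrightarrow> (B1 \<times> B2) \<inter> G \<in> P"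
  using set_algebra_Int[OF prod_algebra times_in_prod_algebra G_in_P] .

lemma \<mu>2_compl_R_strip: "\<mu>2 (((X - R) \<times> X) \<inter> G) = \<mu> (X - R)"
proof -
  have "PiR -` (X - R) \<inter> X = {}"
    using PiR_in_R by auto
  then show ?thesis
    using axiom_III_c[OF compl_R_in_A] fin_add_measure_empty[OF fin_add_\<mu>2] by simp
qed

lemma \<mu>2_times_null_Int_G:
  assumes "B \<in> A" "C \<in> A" "\<mu> C = 0"
  shows "\<mu>2 ((B \<times> C) \<inter> G) = 0"
proof (rule fin_add_measure_null_subset[OF fin_add_\<mu>2 prod_algebra])
  show "(B \<times> C) \<inter> G \<in> P" "B \<times> C \<in> P"
    using assms by (simp_all add: times_Int_G_in_P times_in_prod_algebra)
  show "\<mu>2 (B \<times> C) = 0"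
    using assms by (simp add: \<mu>2_times)
qed auto

end

locale decoupled_structural_model = admissible_structural_model +
  assumes decoupling: "\<forall>B\<in>A. B \<subseteq> R \<longrightarrow> \<mu>2 ((((PiR -` B \<inter> X) - B) \<times> X) \<inter> G) = 0"
begin

lemma \<mu>2_compl_R_strip_zero: "\<mu>2 (((X - R) \<times> X) \<inter> G) = 0"
proof -
  have "PiR -` R \<inter> X = X"
    using PiR_in_R by auto
  then show ?thesis
    using decoupling R_in_A by auto
qed

lemma \<mu>_compl_R_zero: "\<mu> (X - R) = 0"
  using \<mu>2_compl_R_strip_zero \<mu>2_compl_R_strip by simp

lemma \<mu>2_outside_R_times_R: "\<mu>2 (G - R \<times> R) = 0"
proof -
  have split: "G - R \<times> R = ((X - R) \<times> X) \<inter> G \<union> (R \<times> (X - R)) \<inter> G"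
    using G_subset by auto
  have "\<mu>2 (G - R \<times> R) = \<mu>2 (((X - R) \<times> X) \<inter> G) + \<mu>2 ((R \<times> (X - R)) \<inter> G)"
    unfolding split
    by (rule fin_add_measure_Un[OF fin_add_\<mu>2 times_Int_G_in_P times_Int_G_in_P])
      (auto simp: compl_R_in_A space_in_A R_in_A)
  then show ?thesis
    using \<mu>2_compl_R_strip_zero \<mu>2_times_null_Int_G[OF R_in_A compl_R_in_A \<mu>_compl_R_zero]
    by simp
qed

lemma \<mu>2_strip_eq_restrict_R_times_R:
  assumes "B \<in> A" "B \<subseteq> R"
  shows "\<mu>2 ((B \<times> X) \<inter> G) = \<mu>2 ((B \<times> R) \<inter> (G \<inter> R \<times> R))"
proof -
  have "\<mu>2 ((B \<times> X) \<inter> G) = \<mu>2 ((B \<times> R) \<inter> G) + \<mu>2 ((B \<times> X) \<inter> G - (B \<times> R) \<inter> G)"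
    using R_subset
    by (intro fin_add_measure_Diff[OF fin_add_\<mu>2 prod_algebra times_Int_G_in_P times_Int_G_in_P])
      (auto simp: assms(1) R_in_A space_in_A)
  moreover have "(B \<times> X) \<inter> G - (B \<times> R) \<inter> G = (B \<times> (X - R)) \<inter> G"
    by auto
  moreover have "(B \<times> R) \<inter> (G \<inter> R \<times> R) = (B \<times> R) \<inter> G"
    using assms by auto
  ultimately show ?thesis
    using \<mu>2_times_null_Int_G[OF assms(1) compl_R_in_A \<mu>_compl_R_zero] by simp
qed

lemma \<mu>2_preimage_strip:
  assumes "B \<in> A" "B \<subseteq> R"
  shows "\<mu>2 (((PiR -` B \<inter> X) \<times> X) \<inter> G) = \<mu>2 ((B \<times> X) \<inter> G)"
proof -
  let ?Q = "PiR -` B \<inter> X"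
  have Q_in_A: "?Q \<in> A"
    using preimage_in_A assms by blast
  have "B \<subseteq> ?Q"
    using assms PiR_fixes_R R_subset by auto
  then have "\<mu>2 ((?Q \<times> X) \<inter> G) = \<mu>2 ((B \<times> X) \<inter> G) + \<mu>2 ((?Q \<times> X) \<inter> G - (B \<times> X) \<inter> G)"
    by (intro fin_add_measure_Diff[OF fin_add_\<mu>2 prod_algebra times_Int_G_in_P times_Int_G_in_P])
      (auto simp: assms(1) Q_in_A space_in_A)
  moreover have "(?Q \<times> X) \<inter> G - (B \<times> X) \<inter> G = ((?Q - B) \<times> X) \<inter> G"
    by auto
  ultimately show ?thesis
    using decoupling assms by simp
qed

lemma \<mu>2_strip_eq:
  assumes "B \<in> A" "B \<subseteq> R" "\<eta> < 1"
  shows "\<mu>2 ((B \<times> X) \<inter> G) = \<mu> B / (1 - \<eta>)"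
proof -
  have "\<mu>2 ((B \<times> X) \<inter> G) = \<mu> B + \<eta> * \<mu>2 ((B \<times> X) \<inter> G)"
    using axiom_III_c[OF assms(1)] \<mu>2_preimage_strip[OF assms(1,2)] by simp
  then have "(1 - \<eta>) * \<mu>2 ((B \<times> X) \<inter> G) = \<mu> B"
    by (simp add: algebra_simps)
  then show ?thesis
    using \<open>\<eta> < 1\<close> by (simp add: field_simps)
qed

end

theorem theorem4p14:
  fixes X :: "'a set" and A :: "'a set set" and \<mu> :: "'a set \<Rightarrow> real"
    and \<mu>2 :: "('a \<times> 'a) set \<Rightarrow> real" and R I :: "'a set" and PiR :: "'a \<Rightarrow> 'a"
    and G :: "('a \<times> 'a) set" and E0 \<eta> :: real
  assumes adm: "admissible_model X A \<mu> \<mu>2 R I PiR G E0 \<eta>"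
    and eta_lt: "\<eta> < 1"
    and decoupling: "\<forall>B\<in>A. B \<subseteq> R \<longrightarrow> \<mu>2 ((((PiR -` B \<inter> X) - B) \<times> X) \<inter> G) = 0"
  shows "\<mu>2 (G - R \<times> R) = 0
      \<and> (\<forall>B\<in>A. B \<subseteq> R \<longrightarrow> \<mu>2 ((B \<times> X) \<inter> G) = \<mu>2 ((B \<times> R) \<inter> (G \<inter> R \<times> R)))
      \<and> (\<forall>B\<in>A. B \<subseteq> R \<longrightarrow> \<mu>2 ((B \<times> X) \<inter> G) = \<mu> B / (1 - \<eta>))"
proof -
  interpret decoupled_structural_model X A \<mu> \<mu>2 R I PiR G E0 \<eta>
    using adm decoupling by unfold_locales
  show ?thesis
    using \<mu>2_outside_R_times_R \<mu>2_strip_eq_restrict_R_times_R \<mu>2_strip_eq[OF _ _ eta_lt]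
    by blast
qed

end
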